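(* Let $R$ be a commutative $*$-ring with unity and $a,b\in R$. If $a\leq b$ in the natural partial order, then $a\underset{*}{\leqslant} b$, i.e. $a^*a=a^*b$ and $aa^*=ba^*$.
   Context: The natural partial order: $a\leq b$ iff there is $x\in R$ with $a=xa=xb=ax^*=bx^*$. The $*$-order (Drazin): $a\underset{*}{\leqslant} b$ iff $a^*a=a^*b$ and $aa^*=ba^*$. *)

theory Defs
  imports Main
begin

definition is_involution :: "('a::comm_ring_1 \<Rightarrow> 'a) \<Rightarrow> bool" where
  "is_involution s \<longleftrightarrow>
     (\<forall>x y. s (x + y) = s x + s y) \<and>
     (\<forall>x y. s (x * y) = s y * s x) \<and>
     (\<forall>x. s (s x) = x)"

definition nat_le :: "('a::comm_ring_1 \<Rightarrow> 'a) \<Rightarrow> 'a \<Rightarrow> 'a \<Rightarrow> bool" where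
  "nat_le s a b \<longleftrightarrow>
     (\<exists>x. a = x * a \<and> a = x * b \<and> a = a * s x \<and> a = b * s x)"

definition star_le :: "('a::comm_ring_1 \<Rightarrow> 'a) \<Rightarrow> 'a \<Rightarrow> 'a \<Rightarrow> bool" where
  "star_le s a b \<longleftrightarrow> s a * a = s a * b \<and> a * s a = b * s a"

end

theory Submission
  imports Defs
begin

text \<open>Applying the involution to \<open>a = x a\<close> and \<open>a = a x\<^sup>*\<close> shows that \<open>x\<close> and \<open>x\<^sup>*\<close> both
  fix \<open>a\<^sup>*\<close>; then \<open>a\<^sup>*a = a\<^sup>*x b = a\<^sup>*b\<close> and \<open>a a\<^sup>* = b x\<^sup>*a\<^sup>* = b a\<^sup>*\<close>.\<close>

lemma involution_mult_fixed:
  fixes s :: "'a::comm_ring_1 \<Rightarrow> 'a"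
  assumes "is_involution s" and "a = y * a"
  shows "s a = s y * s a"
proof -
  have "s a = s (y * a)" using assms(2) by simp
  also have "\<dots> = s a * s y" using assms(1) unfolding is_involution_def by blast
  finally show ?thesis by (simp add: mult.commute)
qed

lemma involution_involutive:
  "is_involution s \<Longrightarrow> s (s x) = x"
  unfolding is_involution_def by blast

theorem mainTheorem3:
  fixes s :: "'a::comm_ring_1 \<Rightarrow> 'a" and a b :: 'a
  assumes "is_involution s"
    and "nat_le s a b"
  shows "star_le s a b"
proof -
  from assms(2) obtain x where
    xa: "a = x * a" and xb: "a = x * b" and ax: "a = a * s x" and bx: "a = b * s x"
    unfolding nat_le_def by blast
  have "s a = s (s x) * s a"
    using involution_mult_fixed[OF assms(1)] ax by (simp add: mult.commute)
  then have x_fixes: "s a = x * s a"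
    using involution_involutive[OF assms(1)] by simp
  have sx_fixes: "s a = s x * s a"
    using involution_mult_fixed[OF assms(1) xa] .
  have "s a * a = s a * b"
    by (metis x_fixes xb mult.assoc mult.commute)
  moreover have "a * s a = b * s a"
    by (metis sx_fixes bx mult.assoc)
  ultimately show ?thesis unfolding star_le_def ..
qed

end
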